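(* Let $f:\mathbb{R}^d\to\mathbb{R}$ be twice differentiable with $\inf f>-\infty$, and suppose there are constants $L,M>0$ with $\|\nabla f(x)-\nabla f(y)\|\le L\|x-y\|$ and $\|\nabla^2 f(x)-\nabla^2 f(y)\|_{\mathrm{op}}\le M\|x-y\|$ for all $x,y$. Let $x_k\in\mathbb{R}^d$, $s_k\in\mathbb{R}^d$, $x_{k+1}:=x_k+s_k$, $\theta\in(0,1)$, and $B_k,X\in\mathbb{S}^d$, and define $$B_{k+1}:=\frac{1-\theta}{1+\theta}(B_k+X).$$ Then $$\gamma_{k+1}-\gamma_k\le 2dL^2\theta+\frac{dM^2}{2\theta}\|s_k\|^2+\|X\|_F^2-2\langle X,G_k-B_k\rangle.$$
   Context: $\mathbb{S}^d$ is the set of real symmetric $d\times d$ matrices with inner product $\langle A,B\rangle=\mathrm{tr}(A^\top B)$; $\|\cdot\|_F$ is the Frobenius norm and $\|\cdot\|_{\mathrm{op}}$ the spectral norm. For $j\in\{k,k+1\}$, $$\gamma_j:=\|B_j-\nabla^2 f(x_j)\|_F^2-\|\nabla^2 f(x_j)\|_F^2+\frac{\theta}{1-\theta}\|B_j\|_F^2,$$ and $G_k:=\int_0^1\nabla^2 f(x_k+\tau s_k)\,d\tau$. *)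

theory Defs
  imports "HOL-Analysis.Analysis"
begin

text \<open>Matrices in S^d are represented as real^'n^'n (d = CARD('n)), with a symmetry assumption.\<close>

definition frob_inner :: "real^'n^'n \<Rightarrow> real^'n^'n \<Rightarrow> real" where
  "frob_inner A B = (\<Sum>i\<in>UNIV. \<Sum>j\<in>UNIV. A$i$j * B$i$j)"

definition frob_norm :: "real^'n^'n \<Rightarrow> real" where
  "frob_norm A = sqrt (frob_inner A A)"

definition op_norm :: "real^'n^'n \<Rightarrow> real" where
  "op_norm A = onorm (\<lambda>v. A *v v)"

definition sym_mat :: "real^'n^'n \<Rightarrow> bool" where
  "sym_mat A \<longleftrightarrow> transpose A = A"

text \<open>gamma_j with B = B_j and Hx = Hessian at x_j\<close>
definition gamma :: "real \<Rightarrow> real^'n^'n \<Rightarrow> real^'n^'n \<Rightarrow> real" where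
  "gamma \<theta> B Hx = (frob_norm (B - Hx))\<^sup>2 - (frob_norm Hx)\<^sup>2 + \<theta> / (1 - \<theta>) * (frob_norm B)\<^sup>2"

end

theory Submission
  imports Defs
begin

text \<open>
  Write \<open>Y = B\<^sub>k + X\<close> and \<open>c = (1 - \<theta>) / (1 + \<theta>)\<close>. Since
  \<open>\<gamma>(B, H) = \<parallel>B\<parallel>\<^sup>2 / (1 - \<theta>) - 2\<langle>B, H\<rangle>\<close>, the claim becomes an inequality between
  quadratic expressions in \<open>Y\<close> and \<open>B\<^sub>k\<close>, in which the cross terms
  \<open>\<langle>Y, G\<^sub>k - \<nabla>\<^sup>2f(x\<^sub>k\<^sub>+\<^sub>1)\<rangle>\<close>, \<open>(1 - c)\<langle>Y, \<nabla>\<^sup>2f(x\<^sub>k\<^sub>+\<^sub>1)\<rangle>\<close> and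
  \<open>\<langle>B\<^sub>k, \<nabla>\<^sup>2f(x\<^sub>k) - G\<^sub>k\<rangle>\<close> are absorbed by Young's inequality with weights
  \<open>\<theta>/(1+\<theta>)\<close>, \<open>2\<theta>/(1+\<theta>)\<^sup>2\<close> and \<open>\<theta>/(1-\<theta>)\<close>; these weights add up exactly to the
  coefficients of \<open>\<parallel>Y\<parallel>\<^sup>2\<close> and \<open>\<parallel>B\<^sub>k\<parallel>\<^sup>2\<close> available. The remaining terms are bounded by
  \<open>\<parallel>\<nabla>\<^sup>2f(x\<^sub>k\<^sub>+\<^sub>1)\<parallel>\<^sub>F\<^sup>2 \<le> d L\<^sup>2\<close> (a Lipschitz gradient bounds the Hessian in operator norm) and
  \<open>\<parallel>G\<^sub>k - \<nabla>\<^sup>2f(x\<^sub>j)\<parallel>\<^sub>F \<le> \<surd>d M \<parallel>s\<^sub>k\<parallel> / 2\<close> for \<open>j = k, k+1\<close> (a Lipschitz Hessian, averaged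
  along the segment).
\<close>

lemma norm_derivative_le_lipschitz:
  fixes f :: "'a::real_normed_vector \<Rightarrow> 'b::real_normed_vector"
  assumes deriv: "(f has_derivative f') (at x)"
    and lip: "L-lipschitz_on UNIV f"
  shows "norm (f' v) \<le> L * norm v"
proof -
  define q where "q = (\<lambda>t::real. norm (f (x + t *\<^sub>R v) - f x - t *\<^sub>R f' v) / \<bar>t\<bar>)"
  have "((\<lambda>t. x + t *\<^sub>R v) has_derivative (\<lambda>t. t *\<^sub>R v)) (at 0)"
    by (auto intro!: derivative_eq_intros)
  from has_derivative_compose[OF this, of f f'] deriv
  have "((\<lambda>t. f (x + t *\<^sub>R v)) has_derivative (\<lambda>t. t *\<^sub>R f' v)) (at 0)"
    by (simp add: linear.scaleR[OF has_derivative_linear[OF deriv]])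
  then have "(q \<longlongrightarrow> 0) (at 0)"
    by (simp add: has_derivative_at q_def)
  then have "((\<lambda>t. L * norm v + q t) \<longlongrightarrow> L * norm v + 0) (at 0)"
    by (intro tendsto_intros)
  moreover have "norm (f' v) \<le> L * norm v + q t" if "t \<noteq> 0" for t
  proof -
    have "\<bar>t\<bar> * norm (f' v) = norm (t *\<^sub>R f' v)" by simp
    also have "\<dots> \<le> norm (f (x + t *\<^sub>R v) - f x) + norm (f (x + t *\<^sub>R v) - f x - t *\<^sub>R f' v)"
      using norm_triangle_sub[of "t *\<^sub>R f' v" "f (x + t *\<^sub>R v) - f x"]
      by (simp add: norm_minus_commute)
    also have "\<dots> \<le> \<bar>t\<bar> * (L * norm v + q t)"
      using lipschitz_on_normD[OF lip, of "x + t *\<^sub>R v" x] that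
      by (simp add: q_def algebra_simps)
    finally show ?thesis using that by simp
  qed
  ultimately show ?thesis
    by (intro tendsto_le[OF _ _ tendsto_const]) (auto simp: eventually_at_filter)
qed

lemma norm_integral_minus_const_le:
  fixes h :: "real \<Rightarrow> 'a::banach"
  assumes h: "h integrable_on {a..b}" and w: "(w has_integral I) {a..b}" and "a \<le> b"
    and le: "\<And>\<tau>. \<tau> \<in> {a..b} \<Longrightarrow> norm (h \<tau> - c) \<le> w \<tau>"
  shows "norm (integral {a..b} h - (b - a) *\<^sub>R c) \<le> I"
proof -
  have "integral {a..b} h - (b - a) *\<^sub>R c = integral {a..b} (\<lambda>\<tau>. h \<tau> - c)"
    using integral_diff[OF h integrable_const_ivl[of c a b]] \<open>a \<le> b\<close> by simp
  also have "norm \<dots> \<le> integral {a..b} w"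
    using h w le by (intro integral_norm_bound_integral) (auto intro: integrable_diff)
  finally show ?thesis using w by (simp add: integral_unique)
qed

lemma norm_integral_minus_endpoint_le_lipschitz:
  fixes h :: "real \<Rightarrow> 'a::banach"
  assumes lip: "K-lipschitz_on {0..1} h"
  shows "norm (integral {0..1} h - h 0) \<le> K / 2"
    and "norm (integral {0..1} h - h 1) \<le> K / 2"
proof -
  have h: "h integrable_on {0..1}"
    using lip by (intro integrable_continuous_interval lipschitz_on_continuous_on)
  have "((\<lambda>\<tau>. K * \<tau>) has_integral K / 2) {0..1::real}"
    using has_integral_mult_right[OF ident_has_integral[of 0 1]] by simp
  moreover have "((\<lambda>\<tau>. K * (1 - \<tau>)) has_integral K / 2) {0..1::real}"
    using has_integral_mult_right[OF has_integral_diff[OF has_integral_const_real[of 1 0 1]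
          ident_has_integral[of 0 1]], of K]
    by simp
  moreover have "norm (h \<tau> - h 0) \<le> K * \<tau>" "norm (h \<tau> - h 1) \<le> K * (1 - \<tau>)"
    if "\<tau> \<in> {0..1}" for \<tau>
    using lipschitz_on_normD[OF lip that, of 0] lipschitz_on_normD[OF lip that, of 1] that by auto
  ultimately show "norm (integral {0..1} h - h 0) \<le> K / 2"
    and "norm (integral {0..1} h - h 1) \<le> K / 2"
    using norm_integral_minus_const_le[OF h, of _ "K / 2"] by auto
qed

lemma norm_le_sqrt_card_onorm:
  fixes A :: "real^'n^'m"
  shows "norm A \<le> sqrt (real CARD('n)) * onorm ((*v) A)"
proof (rule power2_le_imp_le)
  have "(norm A)\<^sup>2 = (\<Sum>i\<in>UNIV. \<Sum>j\<in>UNIV. (A$i$j)\<^sup>2)"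
    unfolding power2_norm_eq_inner by (simp add: inner_vec_def power2_eq_square)
  also have "\<dots> = (\<Sum>j\<in>UNIV. (norm (column j A))\<^sup>2)"
    unfolding power2_norm_eq_inner column_def
    by (subst sum.swap) (simp add: inner_vec_def power2_eq_square)
  also have "\<dots> \<le> (\<Sum>j\<in>(UNIV::'n set). (onorm ((*v) A))\<^sup>2)"
    by (intro sum_mono power_mono norm_column_le_onorm) simp
  also have "\<dots> = (sqrt (real CARD('n)) * onorm ((*v) A))\<^sup>2"
    by (simp add: power_mult_distrib)
  finally show "(norm A)\<^sup>2 \<le> (sqrt (real CARD('n)) * onorm ((*v) A))\<^sup>2" .
  show "0 \<le> sqrt (real CARD('n)) * onorm ((*v) A)"
    by (simp add: onorm_pos_le)
qed

lemma norm_jacobian_le_lipschitz: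
  fixes g :: "real^'n \<Rightarrow> real^'m"
  assumes "(g has_derivative (\<lambda>h. J *v h)) (at x)" and "L-lipschitz_on UNIV g"
  shows "norm J \<le> sqrt (real CARD('n)) * L"
proof -
  have "onorm ((*v) J) \<le> L"
    using norm_derivative_le_lipschitz[OF assms] by (intro onorm_le) simp
  then show ?thesis
    using norm_le_sqrt_card_onorm[of J] by (simp add: mult_left_mono order_trans)
qed

lemma lipschitz_on_of_onorm_diff_le:
  fixes H :: "'a::real_normed_vector \<Rightarrow> real^'n^'m"
  assumes "\<And>x y. onorm ((*v) (H x - H y)) \<le> M * norm (x - y)" and "M \<ge> 0"
  shows "(sqrt (real CARD('n)) * M)-lipschitz_on UNIV H"
proof (rule lipschitz_onI)
  fix x y
  have "norm (H x - H y) \<le> sqrt (real CARD('n)) * onorm ((*v) (H x - H y))"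
    by (rule norm_le_sqrt_card_onorm)
  also have "\<dots> \<le> sqrt (real CARD('n)) * (M * norm (x - y))"
    using assms(1) by (rule mult_left_mono) simp
  finally show "dist (H x) (H y) \<le> sqrt (real CARD('n)) * M * dist x y"
    by (simp add: dist_norm mult.assoc)
qed (use assms(2) in simp)

lemma lipschitz_on_compose_line:
  assumes "K-lipschitz_on UNIV h"
  shows "(K * norm v)-lipschitz_on T (\<lambda>\<tau>. h (x + \<tau> *\<^sub>R v))"
proof -
  have "(norm v)-lipschitz_on T (\<lambda>\<tau>. x + \<tau> *\<^sub>R v)"
    by (rule lipschitz_onI) (simp_all add: dist_norm scaleR_diff_left[symmetric])
  then show ?thesis
    using lipschitz_on_compose2 lipschitz_on_subset[OF assms] by blast
qed

lemma frob_inner_eq_inner: "frob_inner A B = A \<bullet> B"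
  by (simp add: frob_inner_def inner_vec_def)

lemma frob_norm_eq_norm: "frob_norm A = norm A"
  by (simp add: frob_norm_def frob_inner_eq_inner norm_eq_sqrt_inner)

lemma gamma_eq_norm_inner:
  assumes "\<theta> \<noteq> 1"
  shows "gamma \<theta> B A = (norm B)\<^sup>2 / (1 - \<theta>) - 2 * (B \<bullet> A)"
proof -
  have "(norm (B - A))\<^sup>2 = (norm B)\<^sup>2 - 2 * (B \<bullet> A) + (norm A)\<^sup>2"
    unfolding power2_norm_eq_inner by (simp add: inner_diff_left inner_diff_right inner_commute)
  moreover have "(norm B)\<^sup>2 + \<theta> / (1 - \<theta>) * (norm B)\<^sup>2 = (norm B)\<^sup>2 / (1 - \<theta>)"
    using assms by (simp add: field_simps)
  ultimately show ?thesis
    unfolding gamma_def frob_norm_eq_norm by linarith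
qed

lemma two_inner_le_Young:
  fixes u v :: "'a::real_inner"
  assumes "a > 0"
  shows "2 * (u \<bullet> v) \<le> a * (norm u)\<^sup>2 + (norm v)\<^sup>2 / a"
proof -
  have "0 \<le> (norm (a *\<^sub>R u - v))\<^sup>2"
    by simp
  also have "\<dots> = a * (a * (norm u)\<^sup>2 + (norm v)\<^sup>2 / a - 2 * (u \<bullet> v))"
    unfolding power2_norm_eq_inner using assms
    by (simp add: inner_diff_left inner_diff_right inner_commute algebra_simps)
  finally show ?thesis
    using assms by (simp add: zero_le_mult_iff)
qed

lemma Young_cross_terms_le:
  fixes Y B G H0 H1 :: "'a::real_inner"
  assumes \<theta>: "0 < \<theta>" "\<theta> < 1"
    and "norm (G - H0) \<le> e" "norm (G - H1) \<le> e" "norm H1 \<le> h"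
  defines "c \<equiv> (1 - \<theta>) / (1 + \<theta>)"
  shows "2 * (Y \<bullet> G) - 2 * (c * (Y \<bullet> H1)) + 2 * (B \<bullet> H0) - 2 * (B \<bullet> G)
         \<le> (1 - c\<^sup>2 / (1 - \<theta>)) * (norm Y)\<^sup>2 + \<theta> / (1 - \<theta>) * (norm B)\<^sup>2
           + 2 * h\<^sup>2 * \<theta> + 2 * e\<^sup>2 / \<theta>"
proof -
  have G_H0: "(norm (G - H0))\<^sup>2 \<le> e\<^sup>2" and G_H1: "(norm (G - H1))\<^sup>2 \<le> e\<^sup>2"
    and H1: "(norm H1)\<^sup>2 \<le> h\<^sup>2"
    using assms(3-5) by (simp_all add: power_mono)
  define a1 where "a1 = \<theta> / (1 + \<theta>)"
  define a2 where "a2 = 2 * \<theta> / (1 + \<theta>)\<^sup>2"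
  define b where "b = \<theta> / (1 - \<theta>)"
  have pos: "a1 > 0" "a2 > 0" "b > 0"
    using \<theta> by (simp_all add: a1_def a2_def b_def)
  have Young_Y_G_H1: "2 * (Y \<bullet> G) - 2 * (Y \<bullet> H1) \<le> a1 * (norm Y)\<^sup>2 + e\<^sup>2 / a1"
    using two_inner_le_Young[OF pos(1), of Y "G - H1"] divide_right_mono[OF G_H1, of a1] pos
    by (simp add: inner_diff_right)
  have Young_Y_H1: "2 * ((1 - c) * (Y \<bullet> H1)) \<le> a2 * (norm Y)\<^sup>2 + 2 * h\<^sup>2 * \<theta>"
  proof -
    have "1 - c = 2 * \<theta> / (1 + \<theta>)"
      using \<theta> by (simp add: c_def field_simps)
    then have "(1 - c)\<^sup>2 / a2 = 2 * \<theta>"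
      using \<theta> by (simp add: a2_def power_divide power2_eq_square)
    then have "(norm ((1 - c) *\<^sub>R H1))\<^sup>2 / a2 = 2 * \<theta> * (norm H1)\<^sup>2"
      by (simp add: power_mult_distrib flip: times_divide_eq_left)
    also have "\<dots> \<le> 2 * h\<^sup>2 * \<theta>"
      using H1 \<theta> by simp
    finally show ?thesis
      using two_inner_le_Young[OF pos(2), of Y "(1 - c) *\<^sub>R H1"] by simp
  qed
  have Young_B_H0_G: "2 * (B \<bullet> H0) - 2 * (B \<bullet> G) \<le> b * (norm B)\<^sup>2 + e\<^sup>2 / b"
    using two_inner_le_Young[OF pos(3), of B "H0 - G"] divide_right_mono[OF G_H0, of b] pos
    by (simp add: norm_minus_commute inner_diff_right)
  have weights_Y: "1 - c\<^sup>2 / (1 - \<theta>) = a1 + a2"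
  proof -
    have "c\<^sup>2 / (1 - \<theta>) = (1 - \<theta>) / (1 + \<theta>)\<^sup>2"
      using \<theta> by (simp add: c_def power_divide power2_eq_square)
    also have "\<dots> = 1 - a1 - a2"
      using \<theta> by (simp add: a1_def a2_def divide_simps) (simp add: algebra_simps power2_eq_square)
    finally show ?thesis by simp
  qed
  have "e\<^sup>2 / a1 + e\<^sup>2 / b = 2 * e\<^sup>2 / \<theta>"
    using \<theta> by (simp add: a1_def b_def field_simps)
  then show ?thesis
    unfolding weights_Y b_def[symmetric] distrib_right
    using Young_Y_G_H1 Young_Y_H1 Young_B_H0_G by (simp add: algebra_simps)
qed

lemma gamma_update_le:
  fixes B X G H0 H1 :: "real^'n^'n"
  assumes \<theta>: "0 < \<theta>" "\<theta> < 1"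
    and "norm (G - H0) \<le> e" "norm (G - H1) \<le> e" "norm H1 \<le> h"
  shows "gamma \<theta> (((1 - \<theta>) / (1 + \<theta>)) *\<^sub>R (B + X)) H1 - gamma \<theta> B H0
         \<le> 2 * h\<^sup>2 * \<theta> + 2 * e\<^sup>2 / \<theta> + (norm X)\<^sup>2 - 2 * (X \<bullet> (G - B))"
proof -
  define c where "c = (1 - \<theta>) / (1 + \<theta>)"
  define Y where "Y = B + X"
  have "gamma \<theta> (c *\<^sub>R Y) H1 = c\<^sup>2 / (1 - \<theta>) * (norm Y)\<^sup>2 - 2 * (c * (Y \<bullet> H1))"
    using \<theta> by (simp add: gamma_eq_norm_inner power_mult_distrib)
  moreover have "gamma \<theta> B H0 = (norm B)\<^sup>2 + \<theta> / (1 - \<theta>) * (norm B)\<^sup>2 - 2 * (B \<bullet> H0)"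
    using \<theta> by (simp add: gamma_eq_norm_inner field_simps)
  moreover have "(norm Y)\<^sup>2 = (norm B)\<^sup>2 + 2 * (B \<bullet> X) + (norm X)\<^sup>2"
    unfolding Y_def power2_norm_eq_inner by (simp add: inner_add_left inner_add_right inner_commute)
  then have "(norm X)\<^sup>2 - 2 * (X \<bullet> (G - B)) = (norm Y)\<^sup>2 - (norm B)\<^sup>2 - 2 * (Y \<bullet> G) + 2 * (B \<bullet> G)"
    by (simp add: Y_def inner_diff_right inner_add_left inner_add_right inner_commute)
  ultimately show ?thesis
    using Young_cross_terms_le[OF assms, of Y B, folded c_def]
    unfolding c_def[symmetric] Y_def[symmetric] by (simp add: algebra_simps)
qed

theorem lemma3p2:
  fixes f :: "real^'n \<Rightarrow> real"
    and g :: "real^'n \<Rightarrow> real^'n"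
    and H :: "real^'n \<Rightarrow> real^'n^'n"
    and L M \<theta> :: real
    and xk sk :: "real^'n"
    and Bk X :: "real^'n^'n"
  assumes grad: "\<And>x. (f has_derivative (\<lambda>h. g x \<bullet> h)) (at x)"
    and hess: "\<And>x. (g has_derivative (\<lambda>h. H x *v h)) (at x)"
    and bdd: "bdd_below (range f)"
    and L_pos: "L > 0" and M_pos: "M > 0"
    and L_lip: "\<And>x y. norm (g x - g y) \<le> L * norm (x - y)"
    and M_lip: "\<And>x y. op_norm (H x - H y) \<le> M * norm (x - y)"
    and theta: "0 < \<theta>" "\<theta> < 1"
    and Bk_sym: "sym_mat Bk" and X_sym: "sym_mat X"
  shows "gamma \<theta> (((1 - \<theta>) / (1 + \<theta>)) *\<^sub>R (Bk + X)) (H (xk + sk)) - gamma \<theta> Bk (H xk)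
         \<le> 2 * real CARD('n) * L\<^sup>2 * \<theta> + real CARD('n) * M\<^sup>2 / (2 * \<theta>) * (norm sk)\<^sup>2
           + (frob_norm X)\<^sup>2
           - 2 * frob_inner X (integral {0..1} (\<lambda>\<tau>. H (xk + \<tau> *\<^sub>R sk)) - Bk)"
proof -
  define d where "d = real CARD('n)"
  define G where "G = integral {0..1} (\<lambda>\<tau>. H (xk + \<tau> *\<^sub>R sk))"
  have "(sqrt d * M)-lipschitz_on UNIV H"
    using M_lip less_imp_le[OF M_pos] unfolding d_def op_norm_def
    by (rule lipschitz_on_of_onorm_diff_le)
  then have "(sqrt d * M * norm sk)-lipschitz_on {0..1} (\<lambda>\<tau>. H (xk + \<tau> *\<^sub>R sk))"
    by (rule lipschitz_on_compose_line)
  from norm_integral_minus_endpoint_le_lipschitz[OF this, folded G_def]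
  have "norm (G - H xk) \<le> sqrt d * M * norm sk / 2"
    and "norm (G - H (xk + sk)) \<le> sqrt d * M * norm sk / 2"
    by simp_all
  moreover have "norm (H (xk + sk)) \<le> sqrt d * L"
    unfolding d_def using L_lip L_pos
    by (intro norm_jacobian_le_lipschitz[OF hess] lipschitz_onI) (simp_all add: dist_norm)
  ultimately have "gamma \<theta> (((1 - \<theta>) / (1 + \<theta>)) *\<^sub>R (Bk + X)) (H (xk + sk)) - gamma \<theta> Bk (H xk)
      \<le> 2 * (sqrt d * L)\<^sup>2 * \<theta> + 2 * (sqrt d * M * norm sk / 2)\<^sup>2 / \<theta>
        + (norm X)\<^sup>2 - 2 * (X \<bullet> (G - Bk))"
    by (rule gamma_update_le[OF theta])
  then show ?thesis
    by (simp add: G_def d_def frob_norm_eq_norm frob_inner_eq_inner power_mult_distrib field_simps)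
qed

end
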